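(* Let $\gamma>0$. Then on $\mathcal{D}(X)$, $$\left(\mathfrak{B}^\gamma_{RBF}\right)^{-1}\left(\frac{\gamma^2}{2\sqrt2}\frac{d}{dz}+\sqrt2 M_z\right)\mathfrak{B}^\gamma_{RBF}=X.$$
   Context: $X$ is the position operator $X\varphi(x)=x\varphi(x)$ on $L^2(\mathbb{R})$ with domain $\mathcal{D}(X)=\{\varphi\in L^2(\mathbb{R}):X\varphi\in L^2(\mathbb{R})\}$; $M_z$ is multiplication by $z$. $\mathfrak{B}^\gamma_{RBF}:L^2(\mathbb{R})\to\mathcal{H}_\gamma$ is the (unitary) RBF Segal–Bargmann transform $\mathfrak{B}^\gamma_{RBF}[\varphi](z)=\int_{\mathbb{R}}\mathcal{A}^\gamma_{RBF}(z,x)\varphi(x)dx$, $\mathcal{A}^\gamma_{RBF}(z,x)=\sum_{n\ge0}e_n^\gamma(z)\psi_n^{2/\gamma^2}(x)$, with $e_n^\gamma(z)=\sqrt{\frac{2^n}{\gamma^{2n}n!}}z^n\exp(-z^2/\gamma^2)$ and $\psi_n^\alpha(x)=\left(\frac{\alpha}{\pi}\right)^{1/4}(2^nn!)^{-1/2}H_n(\sqrt\alpha x)e^{-\alpha x^2/2}$. $\mathcal{H}_\gamma$ is the Hilbert space of entire $f$ with $\frac{2}{\pi\gamma^2}\int_{\mathbb{C}}|f(z)|^2\exp\left(\frac{(z-\overline z)^2}{\gamma^2}\right)dA(z)<\infty$. *)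

theory Defs
  imports "HOL-Analysis.Analysis"
begin

fun hermite :: "nat \<Rightarrow> real \<Rightarrow> real" where
  "hermite 0 x = 1"
| "hermite (Suc 0) x = 2 * x"
| "hermite (Suc (Suc n)) x = 2 * x * hermite (Suc n) x - 2 * real (Suc n) * hermite n x"

definition hermite_fun :: "real \<Rightarrow> nat \<Rightarrow> real \<Rightarrow> real" where
  "hermite_fun \<alpha> n x = (\<alpha> / pi) powr (1/4) * (2 ^ n * fact n) powr (-1/2)
      * hermite n (sqrt \<alpha> * x) * exp (- \<alpha> * x\<^sup>2 / 2)"

definition rbf_e :: "real \<Rightarrow> nat \<Rightarrow> complex \<Rightarrow> complex" where
  "rbf_e \<gamma> n z = complex_of_real (sqrt (2 ^ n / (\<gamma> ^ (2 * n) * fact n)))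
      * z ^ n * exp (- z\<^sup>2 / complex_of_real (\<gamma>\<^sup>2))"

definition rbf_kernel :: "real \<Rightarrow> complex \<Rightarrow> real \<Rightarrow> complex" where
  "rbf_kernel \<gamma> z x = (\<Sum>n. rbf_e \<gamma> n z * complex_of_real (hermite_fun (2 / \<gamma>\<^sup>2) n x))"

definition rbf_SB :: "real \<Rightarrow> (real \<Rightarrow> complex) \<Rightarrow> complex \<Rightarrow> complex" where
  "rbf_SB \<gamma> \<phi> z = integral\<^sup>L lborel (\<lambda>x. rbf_kernel \<gamma> z x * \<phi> x)"

definition L2 :: "(real \<Rightarrow> complex) set" where
  "L2 = {\<phi>. \<phi> \<in> borel_measurable lborel \<and> integrable lborel (\<lambda>x. (cmod (\<phi> x))\<^sup>2)}"

definition pos_op :: "(real \<Rightarrow> complex) \<Rightarrow> real \<Rightarrow> complex" where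
  "pos_op \<phi> x = complex_of_real x * \<phi> x"

definition dom_X :: "(real \<Rightarrow> complex) set" where
  "dom_X = {\<phi>. \<phi> \<in> L2 \<and> pos_op \<phi> \<in> L2}"

end

(*
  Summing the generating function exp (2 y t - t^2) = sum_n H_n(y) t^n / n! of the Hermite
  polynomials turns the kernel A(z, x) into the Gaussian c exp (-(sqrt 2 z - x)^2 / gamma^2),
  for which (gamma^2 / (2 sqrt 2)) dA/dz + sqrt 2 z A = x A holds pointwise.  It remains to
  differentiate the transform under the integral sign: for |h| <= 1 the second-order Taylor
  remainder of A in z is at most |h|^2 A(z, x) times an exponential in |x|, and such
  Gaussian-dominated functions f are integrable against every phi in L^2 because
  |f phi| <= (|f|^2 + |phi|^2) / 2.
*)

theory Submission
  imports Defs "HOL-Complex_Analysis.Complex_Analysis" "HOL-Probability.Distributions"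
begin

(* The generating function is differentiated in a complex variable, so the Hermite
   recursion is needed over the complex numbers. *)
fun hermite_complex :: "nat \<Rightarrow> complex \<Rightarrow> complex" where
  "hermite_complex 0 u = 1"
| "hermite_complex (Suc 0) u = 2 * u"
| "hermite_complex (Suc (Suc n)) u =
     2 * u * hermite_complex (Suc n) u - 2 * of_nat (Suc n) * hermite_complex n u"

lemma hermite_complex_of_real: "hermite_complex n (complex_of_real r) = complex_of_real (hermite n r)"
  by (induction n r rule: hermite.induct) auto

lemma hermite_complex_Suc:
  "hermite_complex (Suc n) u = 2 * u * hermite_complex n u - 2 * of_nat n * hermite_complex (n - 1) u"
  by (cases n) auto

lemma has_field_derivative_hermite_complex:
  "(hermite_complex n has_field_derivative 2 * of_nat n * hermite_complex (n - 1) u) (at u)"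
proof (induction n u rule: hermite_complex.induct)
  case (3 n u)
  have "((\<lambda>v. 2 * v * hermite_complex (Suc n) v - 2 * of_nat (Suc n) * hermite_complex n v)
      has_field_derivative 2 * hermite_complex (Suc n) u + 2 * u * (2 * of_nat (Suc n) * hermite_complex n u)
        - 2 * of_nat (Suc n) * (2 * of_nat n * hermite_complex (n - 1) u)) (at u)"
    by (auto intro!: derivative_eq_intros 3)
  also have "2 * hermite_complex (Suc n) u + 2 * u * (2 * of_nat (Suc n) * hermite_complex n u)
        - 2 * of_nat (Suc n) * (2 * of_nat n * hermite_complex (n - 1) u)
      = 2 * of_nat (Suc (Suc n)) * hermite_complex (Suc n) u"
    by (simp add: hermite_complex_Suc[of n u] algebra_simps)
  finally show ?case
    by (simp add: fun_eq_iff del: of_nat_Suc)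
qed (auto intro!: derivative_eq_intros)

lemma higher_deriv_exp_hermite_generating:
  fixes y :: complex
  shows "(deriv ^^ n) (\<lambda>t. exp (2 * y * t - t\<^sup>2))
       = (\<lambda>t. hermite_complex n (y - t) * exp (2 * y * t - t\<^sup>2))"
proof (induction n)
  case (Suc n)
  have "((\<lambda>t. hermite_complex n (y - t) * exp (2 * y * t - t\<^sup>2)) has_field_derivative
      hermite_complex (Suc n) (y - t) * exp (2 * y * t - t\<^sup>2)) (at t)" for t
  proof -
    have "((\<lambda>t. hermite_complex n (y - t)) has_field_derivative
        2 * of_nat n * hermite_complex (n - 1) (y - t) * (-1)) (at t)"
      by (rule DERIV_chain2[OF has_field_derivative_hermite_complex]) (auto intro!: derivative_eq_intros)
    then have "((\<lambda>t. hermite_complex n (y - t) * exp (2 * y * t - t\<^sup>2)) has_field_derivative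
        2 * of_nat n * hermite_complex (n - 1) (y - t) * (-1) * exp (2 * y * t - t\<^sup>2)
          + hermite_complex n (y - t) * (exp (2 * y * t - t\<^sup>2) * (2 * y - 2 * t))) (at t)"
      by (auto intro!: derivative_eq_intros simp: power2_eq_square)
    then show ?thesis
      by (simp add: hermite_complex_Suc[of n "y - t"] algebra_simps)
  qed
  then show ?case
    using Suc by (auto intro!: ext DERIV_imp_deriv)
qed simp

lemma hermite_complex_generating_function:
  fixes y t :: complex
  shows "(\<lambda>n. hermite_complex n y / fact n * t ^ n) sums exp (2 * y * t - t\<^sup>2)"
proof -
  have "(\<lambda>t. exp (2 * y * t - t\<^sup>2)) holomorphic_on ball 0 (norm t + 1)"
    by (auto intro!: holomorphic_intros)
  from holomorphic_power_series[OF this, of t]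
  show ?thesis
    by (simp add: higher_deriv_exp_hermite_generating)
qed

section \<open>Gaussian bounds and differentiation under the integral sign\<close>

lemma integrable_exp_linear_minus_square:
  fixes R g :: real
  assumes "g > 0"
  shows "integrable lborel (\<lambda>x. exp (R * x - x\<^sup>2 / g))"
proof -
  define \<sigma> where "\<sigma> = sqrt (g / 2)"
  define m where "m = R * g / 2"
  have \<sigma>: "2 * \<sigma>\<^sup>2 = g" "\<sigma> > 0"
    using assms by (simp_all add: \<sigma>_def)
  have "exp (R * x - x\<^sup>2 / g) = exp (R * m / 2) * sqrt (2 * pi * \<sigma>\<^sup>2) * normal_density m \<sigma> x" for x
  proof -
    have "R * x - x\<^sup>2 / g = R * m / 2 + (- (x - m)\<^sup>2 / g)"
      using assms by (simp add: m_def field_simps power2_eq_square)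
    then show ?thesis
      using \<sigma>(2) unfolding normal_density_def \<sigma>(1) by (simp add: mult_exp_exp)
  qed
  then show ?thesis
    using \<sigma>(2) by (simp only:) (intro integrable_mult_right integrable_normal_density)
qed

lemma integrable_exp_abs_minus_square:
  fixes R g :: real
  assumes "g > 0"
  shows "integrable lborel (\<lambda>x. exp (R * \<bar>x\<bar> - x\<^sup>2 / g))"
proof (rule Bochner_Integration.integrable_bound)
  show "integrable lborel (\<lambda>x. exp (R * x - x\<^sup>2 / g) + exp ((- R) * x - x\<^sup>2 / g))"
    by (intro Bochner_Integration.integrable_add integrable_exp_linear_minus_square assms)
  have "exp (R * \<bar>x\<bar> - x\<^sup>2 / g) \<le> exp (R * x - x\<^sup>2 / g) + exp ((- R) * x - x\<^sup>2 / g)" for x :: real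
    by (cases "x \<ge> 0") (simp_all add: add_increasing add_increasing2)
  then show "AE x in lborel. norm (exp (R * \<bar>x\<bar> - x\<^sup>2 / g))
      \<le> norm (exp (R * x - x\<^sup>2 / g) + exp ((- R) * x - x\<^sup>2 / g))"
    by (simp add: add_pos_pos)
qed measurable

lemma integrable_mult_L2_of_gaussian_bound:
  fixes f \<phi> :: "real \<Rightarrow> complex"
  assumes "g > 0" and "\<phi> \<in> L2" and "f \<in> borel_measurable lborel"
    and bound: "\<And>x. norm (f x) \<le> Q * exp (R * \<bar>x\<bar> - x\<^sup>2 / g)"
  shows "integrable lborel (\<lambda>x. f x * \<phi> x)"
proof (rule Bochner_Integration.integrable_bound)
  show "integrable lborel (\<lambda>x. (Q\<^sup>2 * exp ((2 * R) * \<bar>x\<bar> - x\<^sup>2 / (g / 2)) + (norm (\<phi> x))\<^sup>2) / 2)"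
    using assms(1,2) unfolding L2_def
    by (intro integrable_divide Bochner_Integration.integrable_add integrable_mult_right
        integrable_exp_abs_minus_square) simp_all
  have "\<phi> \<in> borel_measurable lborel"
    using assms(2) by (simp add: L2_def)
  with assms(3) show "(\<lambda>x. f x * \<phi> x) \<in> borel_measurable lborel"
    by measurable
  have "norm (f x * \<phi> x) \<le> (Q\<^sup>2 * exp ((2 * R) * \<bar>x\<bar> - x\<^sup>2 / (g / 2)) + (norm (\<phi> x))\<^sup>2) / 2" for x
  proof -
    define b where "b = Q * exp (R * \<bar>x\<bar> - x\<^sup>2 / g)"
    have "norm (f x * \<phi> x) \<le> b * norm (\<phi> x)"
      unfolding norm_mult b_def by (rule mult_right_mono[OF bound]) simp
    also have "\<dots> \<le> (b\<^sup>2 + (norm (\<phi> x))\<^sup>2) / 2"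
      using zero_le_power2[of "b - norm (\<phi> x)"] by (simp add: power2_diff)
    also have "b\<^sup>2 = Q\<^sup>2 * exp ((2 * R) * \<bar>x\<bar> - x\<^sup>2 / (g / 2))"
      using assms(1) by (simp add: b_def power_mult_distrib exp_double[symmetric] field_simps)
    finally show ?thesis .
  qed
  then show "AE x in lborel. norm (f x * \<phi> x)
      \<le> norm ((Q\<^sup>2 * exp ((2 * R) * \<bar>x\<bar> - x\<^sup>2 / (g / 2)) + (norm (\<phi> x))\<^sup>2) / 2)"
    by (simp add: add_nonneg_nonneg)
qed

lemma linear_le_exp_abs:
  fixes a b x :: real
  assumes "a \<ge> 0" and "b \<ge> 0"
  shows "a + b * \<bar>x\<bar> \<le> (a + b) * exp \<bar>x\<bar>"
proof -
  have "1 \<le> exp \<bar>x\<bar>" and "\<bar>x\<bar> \<le> exp \<bar>x\<bar>"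
    using exp_ge_add_one_self[of "\<bar>x\<bar>"] by linarith+
  then show ?thesis
    using mult_left_mono[of 1 "exp \<bar>x\<bar>" a] mult_left_mono[of "\<bar>x\<bar>" "exp \<bar>x\<bar>" b] assms
    by (simp add: algebra_simps)
qed

lemma exp_mult_square_le:
  fixes A :: real
  assumes "A \<ge> 0"
  shows "exp A * A\<^sup>2 \<le> 2 * exp (2 * A)"
proof -
  have "A\<^sup>2 \<le> 2 * exp A"
    using exp_lower_Taylor_quadratic[OF assms] assms by linarith
  then show ?thesis
    using mult_left_mono[of "A\<^sup>2" "2 * exp A" "exp A"] by (simp add: exp_double power2_eq_square)
qed

lemma exp_quadratic_remainder_le:
  fixes a b h :: complex
  assumes "norm h \<le> 1"
  shows "norm (exp (h * a + h\<^sup>2 * b) - 1 - h * a)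
      \<le> (norm h)\<^sup>2 * (exp (norm a + norm b) * (norm a + norm b)\<^sup>2 + norm b)"
proof -
  define u where "u = h * a + h\<^sup>2 * b"
  have "(norm h)\<^sup>2 \<le> norm h"
    using assms by (simp add: power2_eq_square mult_left_le_one_le)
  then have "norm u \<le> norm h * (norm a + norm b)"
    unfolding u_def using norm_triangle_ineq[of "h * a" "h\<^sup>2 * b"] mult_right_mono[of "(norm h)\<^sup>2" "norm h" "norm b"]
    by (simp add: norm_mult norm_power distrib_left)
  moreover have "norm h * (norm a + norm b) \<le> norm a + norm b"
    using assms by (simp add: mult_left_le_one_le)
  ultimately have "exp (norm u) * (norm u)\<^sup>2 \<le> exp (norm a + norm b) * (norm h * (norm a + norm b))\<^sup>2"
    by (intro mult_mono power_mono) simp_all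
  moreover have "norm (exp u - 1 - u) \<le> exp (norm u) * (norm u)\<^sup>2"
    using Taylor_exp_field[of u 1] by (simp add: algebra_simps power2_eq_square)
  ultimately have "norm (exp u - 1 - u) \<le> exp (norm a + norm b) * (norm h * (norm a + norm b))\<^sup>2"
    by linarith
  then have remainder_le: "norm (exp u - 1 - u) \<le> (norm h)\<^sup>2 * (exp (norm a + norm b) * (norm a + norm b)\<^sup>2)"
    by (simp only: power_mult_distrib mult_ac)
  have "norm (exp u - 1 - h * a) = norm ((exp u - 1 - u) + h\<^sup>2 * b)"
    by (simp add: u_def algebra_simps)
  also have "\<dots> \<le> norm (exp u - 1 - u) + (norm h)\<^sup>2 * norm b"
    by (rule order.trans[OF norm_triangle_ineq]) (simp add: norm_mult norm_power)
  also have "\<dots> \<le> (norm h)\<^sup>2 * (exp (norm a + norm b) * (norm a + norm b)\<^sup>2 + norm b)"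
    using remainder_le by (simp add: distrib_left)
  finally show ?thesis
    by (simp add: u_def)
qed

lemma has_field_derivative_integral_quadratic_remainder:
  fixes f :: "'b::{real_normed_field, banach, second_countable_topology} \<Rightarrow> 'a \<Rightarrow> 'b"
  assumes "\<And>z. integrable M (f z)" and "integrable M f'" and "integrable M B"
    and remainder: "\<And>h x. norm h \<le> 1 \<Longrightarrow> norm (f (z0 + h) x - f z0 x - h * f' x) \<le> (norm h)\<^sup>2 * B x"
  shows "((\<lambda>z. \<integral>x. f z x \<partial>M) has_field_derivative (\<integral>x. f' x \<partial>M)) (at z0)"
proof -
  define F where "F z = (\<integral>x. f z x \<partial>M)" for z
  define D where "D = (\<integral>x. f' x \<partial>M)"
  have F_le: "norm ((F w - F z0) / (w - z0) - D) \<le> norm (w - z0) * (\<integral>x. B x \<partial>M)"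
    if "w \<noteq> z0" and "norm (w - z0) \<le> 1" for w
  proof -
    have "norm (F w - F z0 - (w - z0) * D) = norm (\<integral>x. f w x - f z0 x - (w - z0) * f' x \<partial>M)"
      using assms(1,2) by (simp add: F_def D_def)
    also have "\<dots> \<le> (\<integral>x. norm (f w x - f z0 x - (w - z0) * f' x) \<partial>M)"
      by (rule integral_norm_bound)
    also have "\<dots> \<le> (\<integral>x. (norm (w - z0))\<^sup>2 * B x \<partial>M)"
      using assms(1-3) remainder[of "w - z0"] that(2) by (intro integral_mono) simp_all
    finally have "norm (F w - F z0 - (w - z0) * D) \<le> (norm (w - z0))\<^sup>2 * (\<integral>x. B x \<partial>M)"
      by simp
    moreover have "(F w - F z0) / (w - z0) - D = (F w - F z0 - (w - z0) * D) / (w - z0)"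
      using that(1) by (simp add: field_simps)
    ultimately show ?thesis
      using that(1) by (simp add: norm_divide power2_eq_square divide_le_eq mult_ac)
  qed
  have "((\<lambda>w. (F w - F z0) / (w - z0) - D) \<longlongrightarrow> 0) (at z0)"
  proof (rule Lim_null_comparison)
    show "\<forall>\<^sub>F w in at z0. norm ((F w - F z0) / (w - z0) - D) \<le> norm (w - z0) * (\<integral>x. B x \<partial>M)"
      unfolding eventually_at by (rule exI[of _ 1]) (auto intro!: F_le simp: dist_norm)
    show "((\<lambda>w. norm (w - z0) * (\<integral>x. B x \<partial>M)) \<longlongrightarrow> 0) (at z0)"
      by (auto intro!: tendsto_eq_intros)
  qed
  then show ?thesis
    unfolding has_field_derivative_iff F_def[symmetric] D_def[symmetric] by (rule LIM_zero_cancel)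
qed

section \<open>The kernel in closed form\<close>

definition rbf_gauss_kernel :: "real \<Rightarrow> complex \<Rightarrow> real \<Rightarrow> complex" where
  "rbf_gauss_kernel \<gamma> z x = complex_of_real ((2 / \<gamma>\<^sup>2 / pi) powr (1/4))
      * exp (- (complex_of_real (sqrt 2) * z - complex_of_real x)\<^sup>2 / complex_of_real (\<gamma>\<^sup>2))"

lemma rbf_e_hermite_fun_coeff:
  assumes "\<gamma> > 0"
  shows "sqrt (2 ^ n / (\<gamma> ^ (2 * n) * fact n)) * (2 ^ n * fact n) powr (-1/2) = 1 / (\<gamma> ^ n * fact n)"
proof -
  have "(2 ^ n * fact n :: real) powr (-1/2) = 1 / (2 ^ n * fact n) powr (1/2)"
    by (simp add: powr_minus_divide[symmetric])
  also have "\<dots> = 1 / (sqrt (2 ^ n) * sqrt (fact n))"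
    by (subst powr_half_sqrt) (simp_all add: real_sqrt_mult)
  finally have p: "(2 ^ n * fact n :: real) powr (-1/2) = 1 / (sqrt (2 ^ n) * sqrt (fact n))" .
  have q: "sqrt (2 ^ n / (\<gamma> ^ (2 * n) * fact n)) = sqrt (2 ^ n) / (\<gamma> ^ n * sqrt (fact n))"
    using assms by (simp add: real_sqrt_divide real_sqrt_mult power_mult real_sqrt_power)
  have "sqrt (fact n) * sqrt (fact n) = (fact n :: real)"
    by simp
  then show ?thesis
    unfolding p q using assms by (simp add: field_simps)
qed

lemma rbf_kernel_eq_gauss_kernel:
  assumes "\<gamma> > 0"
  shows "rbf_kernel \<gamma> z x = rbf_gauss_kernel \<gamma> z x"
proof -
  define \<alpha> where "\<alpha> = 2 / \<gamma>\<^sup>2"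
  define y where "y = sqrt \<alpha> * x"
  define t where "t = z / complex_of_real \<gamma>"
  define P where "P = (\<alpha> / pi) powr (1/4)"
  define K where "K = complex_of_real (P * exp (- \<alpha> * x\<^sup>2 / 2)) * exp (- z\<^sup>2 / complex_of_real (\<gamma>\<^sup>2))"
  have term_eq: "rbf_e \<gamma> n z * complex_of_real (hermite_fun \<alpha> n x)
      = K * (hermite_complex n (complex_of_real y) / fact n * t ^ n)" for n
  proof -
    have "rbf_e \<gamma> n z * complex_of_real (hermite_fun \<alpha> n x)
      = complex_of_real (sqrt (2 ^ n / (\<gamma> ^ (2 * n) * fact n)) * (2 ^ n * fact n) powr (-1/2))
        * K * complex_of_real (hermite n y) * z ^ n"
      unfolding rbf_e_def hermite_fun_def y_def P_def K_def by (simp add: algebra_simps)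
    then show ?thesis
      unfolding rbf_e_hermite_fun_coeff[OF assms] t_def hermite_complex_of_real
      using assms by (simp add: field_simps power_divide)
  qed
  have "rbf_kernel \<gamma> z x = K * exp (2 * complex_of_real y * t - t\<^sup>2)"
    unfolding rbf_kernel_def \<alpha>_def[symmetric] term_eq
    by (rule sums_unique[symmetric], rule sums_mult, rule hermite_complex_generating_function)
  also have "\<dots> = complex_of_real P * exp (complex_of_real (- \<alpha> * x\<^sup>2 / 2)
      + (- z\<^sup>2 / complex_of_real (\<gamma>\<^sup>2)) + (2 * complex_of_real y * t - t\<^sup>2))"
    unfolding K_def exp_add of_real_mult exp_of_real by (simp add: mult.assoc)
  also have "complex_of_real (- \<alpha> * x\<^sup>2 / 2) + (- z\<^sup>2 / complex_of_real (\<gamma>\<^sup>2))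
      + (2 * complex_of_real y * t - t\<^sup>2)
      = - (complex_of_real (sqrt 2) * z - complex_of_real x)\<^sup>2 / complex_of_real (\<gamma>\<^sup>2)"
  proof -
    have "complex_of_real (sqrt 2) ^ 2 = 2"
      by (simp flip: of_real_power)
    then show ?thesis
      using assms by (simp add: \<alpha>_def y_def t_def real_sqrt_divide field_simps power2_eq_square)
  qed
  finally show ?thesis
    unfolding rbf_gauss_kernel_def P_def \<alpha>_def .
qed

lemma rbf_gauss_kernel_measurable [measurable]: "rbf_gauss_kernel \<gamma> z \<in> borel_measurable lborel"
  unfolding rbf_gauss_kernel_def by measurable

lemma norm_rbf_gauss_kernel_le:
  assumes "\<gamma> > 0"
  shows "norm (rbf_gauss_kernel \<gamma> z x) \<le> ((2 / \<gamma>\<^sup>2 / pi) powr (1/4) * exp (2 * (Im z)\<^sup>2 / \<gamma>\<^sup>2))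
            * exp ((2 * sqrt 2 * \<bar>Re z\<bar> / \<gamma>\<^sup>2) * \<bar>x\<bar> - x\<^sup>2 / \<gamma>\<^sup>2)"
proof -
  have "Re (- (complex_of_real (sqrt 2) * z - complex_of_real x)\<^sup>2 / complex_of_real (\<gamma>\<^sup>2))
      = (2 * (Im z)\<^sup>2 - (sqrt 2 * Re z - x)\<^sup>2) / \<gamma>\<^sup>2"
    by (simp add: power2_eq_square algebra_simps diff_divide_distrib add_divide_distrib)
  also have "\<dots> \<le> 2 * (Im z)\<^sup>2 / \<gamma>\<^sup>2 + ((2 * sqrt 2 * \<bar>Re z\<bar> / \<gamma>\<^sup>2) * \<bar>x\<bar> - x\<^sup>2 / \<gamma>\<^sup>2)"
  proof -
    have "Re z * x \<le> \<bar>Re z\<bar> * \<bar>x\<bar>"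
      by (simp flip: abs_mult)
    then have "2 * sqrt 2 * (Re z * x) \<le> 2 * sqrt 2 * \<bar>Re z\<bar> * \<bar>x\<bar>"
      using mult_left_mono[of _ _ "2 * sqrt 2"] by (simp add: mult.assoc)
    moreover have "(sqrt 2 * Re z - x)\<^sup>2 = 2 * (Re z)\<^sup>2 - 2 * sqrt 2 * (Re z * x) + x\<^sup>2"
      by (simp add: power2_diff power_mult_distrib algebra_simps)
    ultimately have "2 * (Im z)\<^sup>2 - (sqrt 2 * Re z - x)\<^sup>2 \<le> 2 * (Im z)\<^sup>2 + (2 * sqrt 2 * \<bar>Re z\<bar> * \<bar>x\<bar> - x\<^sup>2)"
      using zero_le_power2[of "Re z"] by linarith
    then have "(2 * (Im z)\<^sup>2 - (sqrt 2 * Re z - x)\<^sup>2) / \<gamma>\<^sup>2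
        \<le> (2 * (Im z)\<^sup>2 + (2 * sqrt 2 * \<bar>Re z\<bar> * \<bar>x\<bar> - x\<^sup>2)) / \<gamma>\<^sup>2"
      by (rule divide_right_mono) simp
    then show ?thesis
      by (simp add: add_divide_distrib diff_divide_distrib)
  qed
  finally have "exp (Re (- (complex_of_real (sqrt 2) * z - complex_of_real x)\<^sup>2 / complex_of_real (\<gamma>\<^sup>2)))
      \<le> exp (2 * (Im z)\<^sup>2 / \<gamma>\<^sup>2) * exp ((2 * sqrt 2 * \<bar>Re z\<bar> / \<gamma>\<^sup>2) * \<bar>x\<bar> - x\<^sup>2 / \<gamma>\<^sup>2)"
    by (simp only: exp_le_cancel_iff exp_add[symmetric])
  then show ?thesis
    unfolding rbf_gauss_kernel_def norm_mult norm_exp_eq_Re norm_of_real mult.assoc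
    by (simp add: mult_left_mono)
qed

lemma integrable_rbf_gauss_kernel_weighted:
  fixes f \<phi> :: "real \<Rightarrow> complex"
  assumes "\<gamma> > 0" and "\<phi> \<in> L2" and "f \<in> borel_measurable lborel" and "Q \<ge> 0"
    and bound: "\<And>x. norm (f x) \<le> Q * exp (R * \<bar>x\<bar>) * norm (rbf_gauss_kernel \<gamma> z x)"
  shows "integrable lborel (\<lambda>x. f x * \<phi> x)"
proof (rule integrable_mult_L2_of_gaussian_bound[OF _ assms(2,3)])
  show "\<gamma>\<^sup>2 > 0"
    using assms(1) by simp
  fix x
  have "norm (f x) \<le> Q * exp (R * \<bar>x\<bar>) * (((2 / \<gamma>\<^sup>2 / pi) powr (1/4) * exp (2 * (Im z)\<^sup>2 / \<gamma>\<^sup>2))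
      * exp ((2 * sqrt 2 * \<bar>Re z\<bar> / \<gamma>\<^sup>2) * \<bar>x\<bar> - x\<^sup>2 / \<gamma>\<^sup>2))"
    by (rule order.trans[OF bound mult_left_mono[OF norm_rbf_gauss_kernel_le[OF assms(1)]]])
      (use assms(4) in simp)
  also have "\<dots> = (Q * ((2 / \<gamma>\<^sup>2 / pi) powr (1/4) * exp (2 * (Im z)\<^sup>2 / \<gamma>\<^sup>2)))
      * exp ((R + 2 * sqrt 2 * \<bar>Re z\<bar> / \<gamma>\<^sup>2) * \<bar>x\<bar> - x\<^sup>2 / \<gamma>\<^sup>2)"
    by (simp add: exp_add[symmetric] algebra_simps)
  finally show "norm (f x) \<le> (Q * ((2 / \<gamma>\<^sup>2 / pi) powr (1/4) * exp (2 * (Im z)\<^sup>2 / \<gamma>\<^sup>2)))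
      * exp ((R + 2 * sqrt 2 * \<bar>Re z\<bar> / \<gamma>\<^sup>2) * \<bar>x\<bar> - x\<^sup>2 / \<gamma>\<^sup>2)" .
qed

lemma integrable_rbf_gauss_kernel:
  assumes "\<gamma> > 0" and "\<phi> \<in> L2"
  shows "integrable lborel (\<lambda>x. rbf_gauss_kernel \<gamma> z x * \<phi> x)"
  by (rule integrable_rbf_gauss_kernel_weighted[OF assms _ zero_le_one, where z = z and R = 0]) simp_all

definition rbf_gauss_kernel_dz :: "real \<Rightarrow> complex \<Rightarrow> real \<Rightarrow> complex" where
  "rbf_gauss_kernel_dz \<gamma> z x = - 2 * complex_of_real (sqrt 2)
      * (complex_of_real (sqrt 2) * z - complex_of_real x) / complex_of_real (\<gamma>\<^sup>2) * rbf_gauss_kernel \<gamma> z x"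

lemma rbf_gauss_kernel_dz_measurable [measurable]: "rbf_gauss_kernel_dz \<gamma> z \<in> borel_measurable lborel"
  unfolding rbf_gauss_kernel_dz_def by measurable

lemma rbf_gauss_kernel_intertwining:
  assumes "\<gamma> > 0"
  shows "complex_of_real (\<gamma>\<^sup>2 / (2 * sqrt 2)) * rbf_gauss_kernel_dz \<gamma> z x
      + complex_of_real (sqrt 2) * z * rbf_gauss_kernel \<gamma> z x = complex_of_real x * rbf_gauss_kernel \<gamma> z x"
  using assms by (simp add: rbf_gauss_kernel_dz_def field_simps)

lemma rbf_gauss_kernel_add:
  "rbf_gauss_kernel \<gamma> (z + h) x = rbf_gauss_kernel \<gamma> z x
      * exp (h * (- 2 * complex_of_real (sqrt 2) * (complex_of_real (sqrt 2) * z - complex_of_real x)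
                  / complex_of_real (\<gamma>\<^sup>2))
             + h\<^sup>2 * (- 2 / complex_of_real (\<gamma>\<^sup>2)))"
proof -
  have "complex_of_real (sqrt 2) ^ 2 = 2"
    by (simp flip: of_real_power)
  then have exponent: "- (complex_of_real (sqrt 2) * (z + h) - complex_of_real x)\<^sup>2 / complex_of_real (\<gamma>\<^sup>2)
      = - (complex_of_real (sqrt 2) * z - complex_of_real x)\<^sup>2 / complex_of_real (\<gamma>\<^sup>2)
        + (h * (- 2 * complex_of_real (sqrt 2) * (complex_of_real (sqrt 2) * z - complex_of_real x)
                / complex_of_real (\<gamma>\<^sup>2))
           + h\<^sup>2 * (- 2 / complex_of_real (\<gamma>\<^sup>2)))"
    by (simp add: power2_eq_square algebra_simps add_divide_distrib diff_divide_distrib)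
  show ?thesis
    unfolding rbf_gauss_kernel_def exponent by (simp only: exp_add mult.assoc)
qed

lemma rbf_gauss_kernel_taylor:
  assumes "\<gamma> > 0"
  obtains Q R where "Q \<ge> 0"
    and "\<And>h x. norm h \<le> 1 \<Longrightarrow>
      norm (rbf_gauss_kernel \<gamma> (z + h) x - rbf_gauss_kernel \<gamma> z x - h * rbf_gauss_kernel_dz \<gamma> z x)
        \<le> (norm h)\<^sup>2 * (Q * exp (R * \<bar>x\<bar>) * norm (rbf_gauss_kernel \<gamma> z x))"
proof
  define a0 where "a0 = (2 + 4 * norm z) / \<gamma>\<^sup>2"
  define a1 where "a1 = 2 * sqrt 2 / \<gamma>\<^sup>2"
  show "2 * exp (2 * a0) + 2 / \<gamma>\<^sup>2 \<ge> 0"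
    by simp
  fix h :: complex and x :: real
  assume h: "norm h \<le> 1"
  define a where "a = - 2 * complex_of_real (sqrt 2) * (complex_of_real (sqrt 2) * z - complex_of_real x)
      / complex_of_real (\<gamma>\<^sup>2)"
  define b where "b = - 2 / complex_of_real (\<gamma>\<^sup>2)"
  define A where "A = norm a + norm b"
  have "A = (2 * sqrt 2 * norm (complex_of_real (sqrt 2) * z - complex_of_real x) + 2) / \<gamma>\<^sup>2"
    by (simp add: A_def a_def b_def norm_mult norm_divide norm_power add_divide_distrib)
  also have "\<dots> \<le> (2 * sqrt 2 * (sqrt 2 * norm z + \<bar>x\<bar>) + 2) / \<gamma>\<^sup>2"
    by (intro divide_right_mono add_right_mono mult_left_mono order.trans[OF norm_triangle_ineq4])
      (simp_all add: norm_mult)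
  also have "\<dots> = a0 + a1 * \<bar>x\<bar>"
    using assms by (simp add: a0_def a1_def field_simps)
  finally have "exp A * A\<^sup>2 \<le> 2 * exp (2 * (a0 + a1 * \<bar>x\<bar>))"
    by (intro order.trans[OF _ exp_mult_square_le] mult_mono power_mono) (simp_all add: A_def a0_def a1_def)
  then have "exp A * A\<^sup>2 + norm b \<le> (2 * exp (2 * a0) + 2 / \<gamma>\<^sup>2) * exp (2 * a1 * \<bar>x\<bar>)"
    using mult_left_mono[of 1 "exp (2 * a1 * \<bar>x\<bar>)" "2 / \<gamma>\<^sup>2"]
    by (simp add: b_def norm_divide norm_power a1_def algebra_simps flip: exp_add)
  moreover have "rbf_gauss_kernel \<gamma> (z + h) x - rbf_gauss_kernel \<gamma> z x - h * rbf_gauss_kernel_dz \<gamma> z x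
      = rbf_gauss_kernel \<gamma> z x * (exp (h * a + h\<^sup>2 * b) - 1 - h * a)"
    unfolding rbf_gauss_kernel_add rbf_gauss_kernel_dz_def a_def b_def by (simp add: algebra_simps)
  ultimately show "norm (rbf_gauss_kernel \<gamma> (z + h) x - rbf_gauss_kernel \<gamma> z x - h * rbf_gauss_kernel_dz \<gamma> z x)
      \<le> (norm h)\<^sup>2 * ((2 * exp (2 * a0) + 2 / \<gamma>\<^sup>2) * exp (2 * a1 * \<bar>x\<bar>) * norm (rbf_gauss_kernel \<gamma> z x))"
    using exp_quadratic_remainder_le[OF h, of a b]
    by (simp add: norm_mult A_def mult_left_mono mult_right_mono mult_ac order.trans)
qed

lemma integrable_rbf_gauss_kernel_dz:
  assumes "\<gamma> > 0" and "\<phi> \<in> L2"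
  shows "integrable lborel (\<lambda>x. rbf_gauss_kernel_dz \<gamma> z x * \<phi> x)"
proof (rule integrable_rbf_gauss_kernel_weighted[OF assms rbf_gauss_kernel_dz_measurable])
  show "2 * sqrt 2 * (sqrt 2 * norm z + 1) / \<gamma>\<^sup>2 \<ge> 0"
    by simp
  fix x
  have "norm (complex_of_real (sqrt 2) * z - complex_of_real x) \<le> sqrt 2 * norm z + 1 * \<bar>x\<bar>"
    by (rule order.trans[OF norm_triangle_ineq4]) (simp add: norm_mult)
  also have "\<dots> \<le> (sqrt 2 * norm z + 1) * exp (1 * \<bar>x\<bar>)"
    using linear_le_exp_abs[of "sqrt 2 * norm z" 1 x] by simp
  finally show "norm (rbf_gauss_kernel_dz \<gamma> z x)
      \<le> 2 * sqrt 2 * (sqrt 2 * norm z + 1) / \<gamma>\<^sup>2 * exp (1 * \<bar>x\<bar>) * norm (rbf_gauss_kernel \<gamma> z x)"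
    by (simp add: rbf_gauss_kernel_dz_def norm_mult norm_divide norm_power mult_right_mono
        divide_right_mono mult_left_mono)
qed

lemma has_field_derivative_rbf_gauss_transform:
  assumes "\<gamma> > 0" and "\<phi> \<in> L2"
  shows "((\<lambda>z. \<integral>x. rbf_gauss_kernel \<gamma> z x * \<phi> x \<partial>lborel)
      has_field_derivative (\<integral>x. rbf_gauss_kernel_dz \<gamma> z x * \<phi> x \<partial>lborel)) (at z)"
proof -
  obtain Q R where "Q \<ge> 0" and taylor: "\<And>h x. norm h \<le> 1 \<Longrightarrow>
      norm (rbf_gauss_kernel \<gamma> (z + h) x - rbf_gauss_kernel \<gamma> z x - h * rbf_gauss_kernel_dz \<gamma> z x)
        \<le> (norm h)\<^sup>2 * (Q * exp (R * \<bar>x\<bar>) * norm (rbf_gauss_kernel \<gamma> z x))"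
    using rbf_gauss_kernel_taylor[OF assms(1)] by blast
  have "integrable lborel (\<lambda>x. complex_of_real (Q * exp (R * \<bar>x\<bar>) * norm (rbf_gauss_kernel \<gamma> z x)) * \<phi> x)"
    by (rule integrable_rbf_gauss_kernel_weighted[OF assms _ \<open>Q \<ge> 0\<close>, where R = R and z = z])
      (simp_all add: \<open>Q \<ge> 0\<close> abs_mult del: of_real_mult)
  then have "integrable lborel (\<lambda>x. Q * exp (R * \<bar>x\<bar>) * norm (rbf_gauss_kernel \<gamma> z x) * norm (\<phi> x))"
    using \<open>Q \<ge> 0\<close> by (auto dest: integrable_norm simp: norm_mult)
  then show ?thesis
  proof (rule has_field_derivative_integral_quadratic_remainder[rotated 2])
    show "integrable lborel (\<lambda>x. rbf_gauss_kernel \<gamma> w x * \<phi> x)" for w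
      by (rule integrable_rbf_gauss_kernel[OF assms])
    show "integrable lborel (\<lambda>x. rbf_gauss_kernel_dz \<gamma> z x * \<phi> x)"
      by (rule integrable_rbf_gauss_kernel_dz[OF assms])
    fix h :: complex and x :: real
    assume "norm h \<le> 1"
    have "rbf_gauss_kernel \<gamma> (z + h) x * \<phi> x - rbf_gauss_kernel \<gamma> z x * \<phi> x
        - h * (rbf_gauss_kernel_dz \<gamma> z x * \<phi> x)
      = (rbf_gauss_kernel \<gamma> (z + h) x - rbf_gauss_kernel \<gamma> z x - h * rbf_gauss_kernel_dz \<gamma> z x) * \<phi> x"
      by (simp add: algebra_simps)
    then show "norm (rbf_gauss_kernel \<gamma> (z + h) x * \<phi> x - rbf_gauss_kernel \<gamma> z x * \<phi> x
        - h * (rbf_gauss_kernel_dz \<gamma> z x * \<phi> x))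
      \<le> (norm h)\<^sup>2 * (Q * exp (R * \<bar>x\<bar>) * norm (rbf_gauss_kernel \<gamma> z x) * norm (\<phi> x))"
      using mult_right_mono[OF taylor[OF \<open>norm h \<le> 1\<close>], of "norm (\<phi> x)"]
      by (simp add: norm_mult mult_ac)
  qed
qed

theorem mainTheorem14:
  fixes \<gamma> :: real and \<phi> :: "real \<Rightarrow> complex"
  assumes "\<gamma> > 0" and "\<phi> \<in> dom_X"
  shows "\<forall>z. complex_of_real (\<gamma>\<^sup>2 / (2 * sqrt 2)) * deriv (rbf_SB \<gamma> \<phi>) z
              + complex_of_real (sqrt 2) * z * rbf_SB \<gamma> \<phi> z
            = rbf_SB \<gamma> (pos_op \<phi>) z"
proof
  fix z
  let ?K = "rbf_gauss_kernel \<gamma> z" and ?K' = "rbf_gauss_kernel_dz \<gamma> z"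
  have "\<phi> \<in> L2"
    using assms(2) by (simp add: dom_X_def)
  have transform: "rbf_SB \<gamma> \<psi> = (\<lambda>z. \<integral>x. rbf_gauss_kernel \<gamma> z x * \<psi> x \<partial>lborel)" for \<psi>
    unfolding rbf_SB_def[abs_def] rbf_kernel_eq_gauss_kernel[OF assms(1)] ..
  have "deriv (rbf_SB \<gamma> \<phi>) z = (\<integral>x. ?K' x * \<phi> x \<partial>lborel)"
    unfolding transform
    by (rule DERIV_imp_deriv[OF has_field_derivative_rbf_gauss_transform[OF assms(1) \<open>\<phi> \<in> L2\<close>]])
  then have "complex_of_real (\<gamma>\<^sup>2 / (2 * sqrt 2)) * deriv (rbf_SB \<gamma> \<phi>) z
        + complex_of_real (sqrt 2) * z * rbf_SB \<gamma> \<phi> z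
      = (\<integral>x. complex_of_real (\<gamma>\<^sup>2 / (2 * sqrt 2)) * (?K' x * \<phi> x)
          + complex_of_real (sqrt 2) * z * (?K x * \<phi> x) \<partial>lborel)"
    using integrable_rbf_gauss_kernel_dz[OF assms(1) \<open>\<phi> \<in> L2\<close>]
      integrable_rbf_gauss_kernel[OF assms(1) \<open>\<phi> \<in> L2\<close>]
    by (simp add: transform)
  also have "\<dots> = (\<integral>x. ?K x * pos_op \<phi> x \<partial>lborel)"
  proof (rule Bochner_Integration.integral_cong[OF refl])
    fix x
    have "complex_of_real (\<gamma>\<^sup>2 / (2 * sqrt 2)) * (?K' x * \<phi> x) + complex_of_real (sqrt 2) * z * (?K x * \<phi> x)
        = (complex_of_real (\<gamma>\<^sup>2 / (2 * sqrt 2)) * ?K' x + complex_of_real (sqrt 2) * z * ?K x) * \<phi> x"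
      by (simp add: algebra_simps)
    also have "\<dots> = ?K x * pos_op \<phi> x"
      unfolding rbf_gauss_kernel_intertwining[OF assms(1)] pos_op_def by simp
    finally show "complex_of_real (\<gamma>\<^sup>2 / (2 * sqrt 2)) * (?K' x * \<phi> x)
        + complex_of_real (sqrt 2) * z * (?K x * \<phi> x) = ?K x * pos_op \<phi> x" .
  qed
  finally show "complex_of_real (\<gamma>\<^sup>2 / (2 * sqrt 2)) * deriv (rbf_SB \<gamma> \<phi>) z
      + complex_of_real (sqrt 2) * z * rbf_SB \<gamma> \<phi> z = rbf_SB \<gamma> (pos_op \<phi>) z"
    by (simp add: transform)
qed

end
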